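(* Let $G$ be a gap-free simple graph and let $u$ be a minimal monomial generator of $I(G)^2$. Let $X_0$ be the set of variables $x_i$ with $x_i\in (I(G)^{(4)}:u)$ (possibly empty). Then $$\big(I(G)^{(4)}:u\big)+\big(I(G)^3:u\big)=\big(I(G)^3:u\big)+(X_0).$$
   Context: $S=\mathbb{K}[x_1,\dots,x_n]$ over a field $\mathbb{K}$; vertices of $G$ are the variables, edges identified with quadratic monomials. $I(G)$ is the edge ideal and $I(G)^{(s)}=\bigcap_{C\in\mathcal{C}(G)}\mathfrak{p}_C^s$, where $\mathcal{C}(G)$ is the set of minimal vertex covers and $\mathfrak{p}_C$ is generated by the variables in $C$. Two disjoint edges form a gap if the induced subgraph on their four endpoints has only these two edges; $G$ is gap-free if it has no gap. $(X_0)$ denotes the ideal generated by $X_0$ (the zero ideal if $X_0=\emptyset$). *)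

theory Defs
  imports "HOL-Library.Poly_Mapping"
begin

type_synonym ('v, 'k) mpoly = "('v \<Rightarrow>\<^sub>0 nat) \<Rightarrow>\<^sub>0 'k"

definition monom :: "('v \<Rightarrow>\<^sub>0 nat) \<Rightarrow> ('v, 'k::comm_ring_1) mpoly" where
  "monom a = Poly_Mapping.single a 1"

definition var :: "'v \<Rightarrow> ('v, 'k::comm_ring_1) mpoly" where
  "var i = monom (Poly_Mapping.single i 1)"

definition is_monomial :: "('v, 'k::comm_ring_1) mpoly \<Rightarrow> bool" where
  "is_monomial u \<longleftrightarrow> (\<exists>a. u = monom a)"

inductive_set ideal_gen :: "'a::comm_ring_1 set \<Rightarrow> 'a set" for A where
  zero: "0 \<in> ideal_gen A"
| step: "a \<in> A \<Longrightarrow> f \<in> ideal_gen A \<Longrightarrow> r * a + f \<in> ideal_gen A"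

definition ideal_prod :: "'a::comm_ring_1 set \<Rightarrow> 'a set \<Rightarrow> 'a set" where
  "ideal_prod I J = ideal_gen {f * g | f g. f \<in> I \<and> g \<in> J}"

fun ideal_pow :: "'a::comm_ring_1 set \<Rightarrow> nat \<Rightarrow> 'a set" where
  "ideal_pow I 0 = UNIV"
| "ideal_pow I (Suc s) = ideal_prod (ideal_pow I s) I"

definition ideal_sum :: "'a::comm_ring_1 set \<Rightarrow> 'a set \<Rightarrow> 'a set" where
  "ideal_sum I J = {f + g | f g. f \<in> I \<and> g \<in> J}"

definition ideal_colon :: "'a::comm_ring_1 set \<Rightarrow> 'a \<Rightarrow> 'a set" where
  "ideal_colon I u = {f. f * u \<in> I}"

definition simple_graph :: "'v set set \<Rightarrow> bool" where
  "simple_graph E \<longleftrightarrow> (\<forall>e\<in>E. card e = 2)"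

definition gap_free :: "'v set set \<Rightarrow> bool" where
  "gap_free E \<longleftrightarrow> \<not> (\<exists>e1\<in>E. \<exists>e2\<in>E. e1 \<inter> e2 = {} \<and>
      {e \<in> E. e \<subseteq> e1 \<union> e2} = {e1, e2})"

definition edge_ideal :: "'v set set \<Rightarrow> ('v, 'k::comm_ring_1) mpoly set" where
  "edge_ideal E = ideal_gen {var i * var j | i j. {i, j} \<in> E}"

definition vertex_cover :: "'v set set \<Rightarrow> 'v set \<Rightarrow> bool" where
  "vertex_cover E C \<longleftrightarrow> (\<forall>e\<in>E. e \<inter> C \<noteq> {})"

definition min_vertex_covers :: "'v set set \<Rightarrow> 'v set set" where
  "min_vertex_covers E = {C. vertex_cover E C \<and> (\<forall>D. D \<subset> C \<longrightarrow> \<not> vertex_cover E D)}"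

definition prime_of :: "'v set \<Rightarrow> ('v, 'k::comm_ring_1) mpoly set" where
  "prime_of C = ideal_gen (var ` C)"

definition symbolic_power :: "'v set set \<Rightarrow> nat \<Rightarrow> ('v, 'k::comm_ring_1) mpoly set" where
  "symbolic_power E s = (\<Inter>C\<in>min_vertex_covers E. ideal_pow (prime_of C) s)"

definition min_monomial_gen :: "('v, 'k::comm_ring_1) mpoly set \<Rightarrow> ('v, 'k) mpoly \<Rightarrow> bool" where
  "min_monomial_gen I u \<longleftrightarrow> is_monomial u \<and> u \<in> I \<and>
     (\<forall>v. is_monomial v \<and> v \<in> I \<and> v dvd u \<longrightarrow> v = u)"

end

theory Submission
  imports Defs "HOL-Library.Multiset"
begin

text \<open>All ideals involved are monomial, so the identity is a statement about exponent vectors.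
Write \<open>u = x\<^sub>p x\<^sub>q x\<^sub>r x\<^sub>s\<close> with edges \<open>pq\<close>, \<open>rs\<close>, and let \<open>m\<close> be a monomial such that \<open>m u\<close>
lies in \<open>I(G)\<^sup>(\<^sup>4\<^sup>)\<close> (every vertex cover has weight at least 4) but is not divisible by a product of
three edges. One has to find a variable \<open>x\<^sub>i\<close> dividing \<open>m\<close> with \<open>x\<^sub>i u \<in> I(G)\<^sup>(\<^sup>4\<^sup>)\<close>. If there is none,
the support of \<open>m\<close> is independent and avoids \<open>p, q, r, s\<close>, and neighbours in the support of \<open>m\<close> of the
two ends of an edge of \<open>u\<close> must coincide, since otherwise three edges divide \<open>m u\<close>. Depending on how
\<open>pq\<close> and \<open>rs\<close> meet, this produces a vertex cover of weight at most 3. The only escape is two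
disjoint edges: if their ends have a common such neighbour \<open>y\<close>, either a missing cross edge again
gives a light cover, or \<open>y, p, q, r, s\<close> span a \<open>K\<^sub>5\<close> and \<open>x\<^sub>y u \<in> I(G)\<^sup>(\<^sup>4\<^sup>)\<close>; if the neighbours differ,
there are no cross edges at all and \<open>pq\<close>, \<open>rs\<close> form a gap.\<close>

section \<open>Ideals generated by a set\<close>

lemma ideal_gen_add: "x \<in> ideal_gen A \<Longrightarrow> y \<in> ideal_gen A \<Longrightarrow> x + y \<in> ideal_gen A"
proof (induction x rule: ideal_gen.induct)
  case (step a f r)
  then have "r * a + (f + y) \<in> ideal_gen A" by (intro ideal_gen.step) auto
  then show ?case by (simp add: add.assoc)
qed simp

lemma ideal_gen_mult_left: "x \<in> ideal_gen A \<Longrightarrow> r * x \<in> ideal_gen A"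
proof (induction x rule: ideal_gen.induct)
  case zero then show ?case by (simp add: ideal_gen.zero)
next
  case (step a f s)
  then have "(r * s) * a + r * f \<in> ideal_gen A" by (intro ideal_gen.step) auto
  then show ?case by (simp add: algebra_simps)
qed

lemma ideal_gen_base: "a \<in> A \<Longrightarrow> a \<in> ideal_gen A"
  using ideal_gen.step[of a A 0 1] by (simp add: ideal_gen.zero)

lemma ideal_gen_least: "A \<subseteq> ideal_gen B \<Longrightarrow> ideal_gen A \<subseteq> ideal_gen B"
proof
  fix x assume A: "A \<subseteq> ideal_gen B" and x: "x \<in> ideal_gen A"
  from x show "x \<in> ideal_gen B"
    by (induction x rule: ideal_gen.induct) (use A in \<open>auto intro: ideal_gen_add ideal_gen_mult_left ideal_gen.zero\<close>)
qed

lemma ideal_gen_sum: "(\<And>i. i \<in> S \<Longrightarrow> g i \<in> ideal_gen A) \<Longrightarrow> sum g S \<in> ideal_gen A"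
  by (induction S rule: infinite_finite_induct) (auto intro: ideal_gen_add ideal_gen.zero)

lemma mult_mem_ideal_gen_prod:
  assumes "f \<in> ideal_gen A" "g \<in> ideal_gen B"
  shows "f * g \<in> ideal_gen {a * b | a b. a \<in> A \<and> b \<in> B}"
proof -
  have gen_mult: "a * g \<in> ideal_gen {a * b | a b. a \<in> A \<and> b \<in> B}" if "a \<in> A" for a
    using assms(2)
  proof (induction g rule: ideal_gen.induct)
    case zero then show ?case by (simp add: ideal_gen.zero)
  next
    case (step b h s)
    have "s * (a * b) + a * h \<in> ideal_gen {a * b | a b. a \<in> A \<and> b \<in> B}"
      using step that by (intro ideal_gen.step) auto
    then show ?case by (simp add: algebra_simps)
  qed
  from assms(1) show ?thesis
  proof (induction f rule: ideal_gen.induct)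
    case zero then show ?case by (simp add: ideal_gen.zero)
  next
    case (step a h r)
    have "r * (a * g) + h * g \<in> ideal_gen {a * b | a b. a \<in> A \<and> b \<in> B}"
      using step gen_mult by (intro ideal_gen_add ideal_gen_mult_left[of "a * g"]) auto
    then show ?case by (simp add: algebra_simps)
  qed
qed

lemma ideal_prod_ideal_gen:
  "ideal_prod (ideal_gen A) (ideal_gen B) = ideal_gen {a * b | a b. a \<in> A \<and> b \<in> B}"
  unfolding ideal_prod_def
  by (intro equalityI ideal_gen_least) (auto intro: mult_mem_ideal_gen_prod ideal_gen_base)

section \<open>Monomial ideals\<close>

lemma keys_monom [simp]: "Poly_Mapping.keys (monom a :: ('v, 'k::comm_ring_1) mpoly) = {a}"
  by (simp add: monom_def)

lemma monom_mult: "(monom a :: ('v, 'k::comm_ring_1) mpoly) * monom b = monom (a + b)"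
  by (simp add: monom_def mult_single)

lemma lookup_mult_monom:
  fixes f :: "('v, 'k::comm_ring_1) mpoly"
  shows "Poly_Mapping.lookup (f * monom c) (a + c) = Poly_Mapping.lookup f a"
proof -
  have monom_factor: "(\<Sum>q. Poly_Mapping.lookup (monom c :: ('v, 'k) mpoly) q when a + c = l + q)
      = ((1::'k) when l = a)" for l
  proof -
    have "(\<Sum>q. Poly_Mapping.lookup (monom c :: ('v, 'k) mpoly) q when a + c = l + q)
        = (\<Sum>q. ((1::'k) when a + c = l + q) when c = q)"
      unfolding monom_def lookup_single by (simp add: when_commute)
    also have "\<dots> = ((1::'k) when a + c = l + c)" by (rule Sum_any_when_equal')
    also have "\<dots> = ((1::'k) when l = a)" by (rule when_cong) auto
    finally show ?thesis .
  qed
  have "Poly_Mapping.lookup (f * monom c) (a + c) = (\<Sum>l. Poly_Mapping.lookup f l * ((1::'k) when l = a))"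
    unfolding lookup_mult monom_factor ..
  also have "\<dots> = Poly_Mapping.lookup f a" by (simp add: mult_when)
  finally show ?thesis .
qed

lemma keys_mult_monom:
  fixes f :: "('v, 'k::comm_ring_1) mpoly"
  shows "Poly_Mapping.keys (f * monom c) = (\<lambda>a. a + c) ` Poly_Mapping.keys f"
proof
  show "Poly_Mapping.keys (f * monom c) \<subseteq> (\<lambda>a. a + c) ` Poly_Mapping.keys f"
    using keys_mult[of f "monom c"] by auto
  show "(\<lambda>a. a + c) ` Poly_Mapping.keys f \<subseteq> Poly_Mapping.keys (f * monom c)"
    by (auto simp: in_keys_iff lookup_mult_monom)
qed

lemma sum_single_lookup:
  fixes f :: "'a \<Rightarrow>\<^sub>0 'b::comm_monoid_add"
  shows "(\<Sum>a\<in>Poly_Mapping.keys f. Poly_Mapping.single a (Poly_Mapping.lookup f a)) = f"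
proof (rule poly_mapping_eqI)
  fix k
  show "Poly_Mapping.lookup (\<Sum>a\<in>Poly_Mapping.keys f. Poly_Mapping.single a (Poly_Mapping.lookup f a)) k
      = Poly_Mapping.lookup f k"
    unfolding lookup_sum lookup_single
    by (cases "k \<in> Poly_Mapping.keys f") (auto simp: when_def in_keys_iff)
qed

definition exp_le :: "('v \<Rightarrow>\<^sub>0 nat) \<Rightarrow> ('v \<Rightarrow>\<^sub>0 nat) \<Rightarrow> bool" where
  "exp_le a b \<longleftrightarrow> (\<forall>i. Poly_Mapping.lookup a i \<le> Poly_Mapping.lookup b i)"

lemma exp_le_diff_add: "exp_le g a \<Longrightarrow> (a - g) + g = a"
  by (rule poly_mapping_eqI) (simp add: exp_le_def lookup_add minus_poly_mapping.rep_eq)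

lemma exp_le_add: "exp_le g (g + b)"
  by (simp add: exp_le_def lookup_add)

lemma exp_le_single: "exp_le (Poly_Mapping.single i 1) a \<longleftrightarrow> 1 \<le> Poly_Mapping.lookup a i"
  by (auto simp: exp_le_def lookup_single when_def)

text \<open>The span of the monomials whose exponents satisfy \<open>P\<close>; an ideal when \<open>P\<close> is upward closed.\<close>
definition monomial_ideal :: "(('v \<Rightarrow>\<^sub>0 nat) \<Rightarrow> bool) \<Rightarrow> ('v, 'k::comm_ring_1) mpoly set" where
  "monomial_ideal P = {f. \<forall>a\<in>Poly_Mapping.keys f. P a}"

lemma ideal_gen_monom:
  "ideal_gen (monom ` G :: ('v, 'k::comm_ring_1) mpoly set) = monomial_ideal (\<lambda>a. \<exists>g\<in>G. exp_le g a)"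
proof
  show "ideal_gen (monom ` G :: ('v, 'k) mpoly set) \<subseteq> monomial_ideal (\<lambda>a. \<exists>g\<in>G. exp_le g a)"
  proof
    fix x :: "('v, 'k) mpoly" assume "x \<in> ideal_gen (monom ` G)"
    then show "x \<in> monomial_ideal (\<lambda>a. \<exists>g\<in>G. exp_le g a)"
    proof (induction x rule: ideal_gen.induct)
      case zero then show ?case by (simp add: monomial_ideal_def)
    next
      case (step m f r)
      then obtain g where g: "g \<in> G" "m = monom g" by auto
      have "Poly_Mapping.keys (r * m + f) \<subseteq> (\<lambda>a. a + g) ` Poly_Mapping.keys r \<union> Poly_Mapping.keys f"
        using keys_add[of "r * m" f] keys_mult_monom[of r g] g by auto
      moreover have "exp_le g (a + g)" for a
        using exp_le_add[of g a] by (simp add: add.commute)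
      ultimately show ?case using step g unfolding monomial_ideal_def by blast
    qed
  qed
  show "monomial_ideal (\<lambda>a. \<exists>g\<in>G. exp_le g a) \<subseteq> ideal_gen (monom ` G :: ('v, 'k) mpoly set)"
  proof
    fix f :: "('v, 'k) mpoly" assume f: "f \<in> monomial_ideal (\<lambda>a. \<exists>g\<in>G. exp_le g a)"
    have "Poly_Mapping.single a (Poly_Mapping.lookup f a) \<in> ideal_gen (monom ` G)"
      if "a \<in> Poly_Mapping.keys f" for a
    proof -
      from f that obtain g where g: "g \<in> G" "exp_le g a" by (auto simp: monomial_ideal_def)
      have "Poly_Mapping.single a (Poly_Mapping.lookup f a)
          = Poly_Mapping.single (a - g) (Poly_Mapping.lookup f a) * monom g"
        by (simp add: monom_def mult_single exp_le_diff_add[OF g(2)])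
      also have "\<dots> \<in> ideal_gen (monom ` G)"
        using g by (intro ideal_gen_mult_left ideal_gen_base) auto
      finally show ?thesis .
    qed
    then have "(\<Sum>a\<in>Poly_Mapping.keys f. Poly_Mapping.single a (Poly_Mapping.lookup f a)) \<in> ideal_gen (monom ` G)"
      by (intro ideal_gen_sum)
    then show "f \<in> ideal_gen (monom ` G)" by (simp add: sum_single_lookup)
  qed
qed

lemma ideal_colon_monomial_ideal:
  "ideal_colon (monomial_ideal P :: ('v, 'k::comm_ring_1) mpoly set) (monom c)
     = monomial_ideal (\<lambda>a. P (a + c))"
  unfolding ideal_colon_def monomial_ideal_def by (auto simp: keys_mult_monom)

lemma ideal_sum_monomial_ideal:
  "ideal_sum (monomial_ideal P :: ('v, 'k::comm_ring_1) mpoly set) (monomial_ideal Q)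
     = monomial_ideal (\<lambda>a. P a \<or> Q a)"
proof
  show "ideal_sum (monomial_ideal P :: ('v, 'k) mpoly set) (monomial_ideal Q) \<subseteq> monomial_ideal (\<lambda>a. P a \<or> Q a)"
  proof
    fix f :: "('v, 'k) mpoly" assume "f \<in> ideal_sum (monomial_ideal P) (monomial_ideal Q)"
    then obtain g h where gh: "f = g + h" "g \<in> monomial_ideal P" "h \<in> monomial_ideal Q"
      unfolding ideal_sum_def by blast
    have "Poly_Mapping.keys f \<subseteq> Poly_Mapping.keys g \<union> Poly_Mapping.keys h"
      unfolding gh(1) by (rule keys_add)
    then show "f \<in> monomial_ideal (\<lambda>a. P a \<or> Q a)" using gh(2,3) unfolding monomial_ideal_def by blast
  qed
  show "monomial_ideal (\<lambda>a. P a \<or> Q a) \<subseteq> ideal_sum (monomial_ideal P :: ('v, 'k) mpoly set) (monomial_ideal Q)"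
  proof
    fix f :: "('v, 'k) mpoly" assume f: "f \<in> monomial_ideal (\<lambda>a. P a \<or> Q a)"
    define part where "part S = (\<Sum>a\<in>S. Poly_Mapping.single a (Poly_Mapping.lookup f a))" for S
    have keys_part: "Poly_Mapping.keys (part S) \<subseteq> S" for S
      unfolding part_def using keys_sum[of "\<lambda>a. Poly_Mapping.single a (Poly_Mapping.lookup f a)" S]
      by (auto simp: keys_single split: if_splits)
    have "f = part (Poly_Mapping.keys f)" unfolding part_def by (simp add: sum_single_lookup)
    also have "\<dots> = part (Poly_Mapping.keys f \<inter> Collect P) + part (Poly_Mapping.keys f - Collect P)"
      unfolding part_def by (rule sum.Int_Diff) simp
    finally have f_split: "f = part (Poly_Mapping.keys f \<inter> Collect P) + part (Poly_Mapping.keys f - Collect P)" .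
    have "part (Poly_Mapping.keys f \<inter> Collect P) \<in> monomial_ideal P"
      using keys_part unfolding monomial_ideal_def by blast
    moreover have "part (Poly_Mapping.keys f - Collect P) \<in> monomial_ideal Q"
      using keys_part f unfolding monomial_ideal_def by blast
    ultimately show "f \<in> ideal_sum (monomial_ideal P) (monomial_ideal Q)"
      unfolding ideal_sum_def using f_split by blast
  qed
qed

lemma ideal_gen_vars:
  "ideal_gen (var ` X :: ('v, 'k::comm_ring_1) mpoly set)
     = monomial_ideal (\<lambda>a. \<exists>i\<in>X. 1 \<le> Poly_Mapping.lookup a i)"
proof -
  have vars: "var ` X = (monom ` ((\<lambda>i. Poly_Mapping.single i 1) ` X) :: ('v, 'k) mpoly set)"
    by (auto simp: var_def)
  have "(\<exists>g\<in>(\<lambda>i. Poly_Mapping.single i 1) ` X. exp_le g a) \<longleftrightarrow> (\<exists>i\<in>X. 1 \<le> Poly_Mapping.lookup a i)"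
    for a :: "'v \<Rightarrow>\<^sub>0 nat"
    unfolding Bex_def image_iff exp_le_single[symmetric] by blast
  then show ?thesis unfolding vars ideal_gen_monom by presburger
qed

lemma var_mem_monomial_ideal:
  "(var i :: ('v, 'k::comm_ring_1) mpoly) \<in> monomial_ideal P \<longleftrightarrow> P (Poly_Mapping.single i 1)"
  by (simp add: var_def monomial_ideal_def)

fun sumset_pow :: "('v \<Rightarrow>\<^sub>0 nat) set \<Rightarrow> nat \<Rightarrow> ('v \<Rightarrow>\<^sub>0 nat) set" where
  "sumset_pow G 0 = {0}"
| "sumset_pow G (Suc s) = {a + g | a g. a \<in> sumset_pow G s \<and> g \<in> G}"

lemma ideal_pow_ideal_gen_monom:
  "ideal_pow (ideal_gen (monom ` G :: ('v, 'k::comm_ring_1) mpoly set)) s = ideal_gen (monom ` sumset_pow G s)"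
proof (induction s)
  case 0
  have "r \<in> ideal_gen (monom ` {0} :: ('v, 'k) mpoly set)" for r :: "('v, 'k) mpoly"
    using ideal_gen.step[of "monom 0" "monom ` {0}" 0 r, OF _ ideal_gen.zero] by (simp add: monom_def)
  then show ?case by (simp only: ideal_pow.simps sumset_pow.simps) blast
next
  case (Suc s)
  have "{a * b | a b. a \<in> monom ` sumset_pow G s \<and> b \<in> (monom ` G :: ('v, 'k) mpoly set)}
      = monom ` {a + g | a g. a \<in> sumset_pow G s \<and> g \<in> G}" (is "?L = ?R")
  proof
    show "?L \<subseteq> ?R" by (auto simp: monom_mult intro!: imageI) blast
    show "?R \<subseteq> ?L"
    proof
      fix m assume "m \<in> ?R"
      then obtain a g where ag: "m = monom (a + g)" "a \<in> sumset_pow G s" "g \<in> G" by auto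
      then have "m = monom a * monom g" by (simp add: monom_mult)
      then show "m \<in> ?L" using ag by blast
    qed
  qed
  then show ?case using Suc by (simp add: ideal_prod_ideal_gen)
qed

lemma exp_le_add_iff: "exp_le (g + h) a \<longleftrightarrow> exp_le h a \<and> exp_le g (a - h)"
proof -
  have "x + y \<le> z \<longleftrightarrow> y \<le> z \<and> x \<le> z - y" for x y z :: nat by arith
  then show ?thesis unfolding exp_le_def lookup_add minus_poly_mapping.rep_eq by blast
qed

lemma sum_lookup_remove_single:
  fixes a :: "'v \<Rightarrow>\<^sub>0 nat"
  assumes "finite C" "i \<in> C" "1 \<le> Poly_Mapping.lookup a i"
  shows "(\<Sum>j\<in>C. Poly_Mapping.lookup a j)
           = (\<Sum>j\<in>C. Poly_Mapping.lookup (a - Poly_Mapping.single i 1) j) + 1"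
proof -
  define a' where "a' = a - Poly_Mapping.single i 1"
  have a: "a = a' + Poly_Mapping.single i 1"
    unfolding a'_def by (rule exp_le_diff_add[OF exp_le_single[THEN iffD2, OF assms(3)], symmetric])
  have "(\<Sum>j\<in>C. Poly_Mapping.lookup (a' + Poly_Mapping.single i 1) j) = (\<Sum>j\<in>C. Poly_Mapping.lookup a' j) + 1"
    using assms(1,2) by (simp add: lookup_add lookup_single when_def sum.distrib)
  then show ?thesis unfolding a'_def[symmetric] by (subst a)
qed

lemma exp_le_sumset_pow_vars:
  assumes "finite C"
  shows "(\<exists>g\<in>sumset_pow ((\<lambda>i. Poly_Mapping.single i 1) ` C) s. exp_le g a)
           \<longleftrightarrow> s \<le> (\<Sum>i\<in>C. Poly_Mapping.lookup a i)"
proof (induction s arbitrary: a)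
  case 0
  then show ?case by (simp add: exp_le_def)
next
  case (Suc s)
  show ?case
  proof
    assume "\<exists>g\<in>sumset_pow ((\<lambda>i. Poly_Mapping.single i 1) ` C) (Suc s). exp_le g a"
    then obtain g i where g: "g \<in> sumset_pow ((\<lambda>i. Poly_Mapping.single i 1) ` C) s" "i \<in> C"
      and le: "exp_le (g + Poly_Mapping.single i 1) a" by auto
    have ai: "1 \<le> Poly_Mapping.lookup a i"
      using le exp_le_single exp_le_add_iff by metis
    have "s \<le> (\<Sum>j\<in>C. Poly_Mapping.lookup (a - Poly_Mapping.single i 1) j)"
      using Suc.IH[of "a - Poly_Mapping.single i 1"] g(1) le exp_le_add_iff by blast
    then show "Suc s \<le> (\<Sum>i\<in>C. Poly_Mapping.lookup a i)"
      using sum_lookup_remove_single[OF assms g(2) ai] by linarith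
  next
    assume s: "Suc s \<le> (\<Sum>i\<in>C. Poly_Mapping.lookup a i)"
    then have "(\<Sum>i\<in>C. Poly_Mapping.lookup a i) \<noteq> 0" by linarith
    then obtain i where "i \<in> C" "Poly_Mapping.lookup a i \<noteq> 0"
      using sum.not_neutral_contains_not_neutral by blast
    then have i: "i \<in> C" "1 \<le> Poly_Mapping.lookup a i" by simp_all
    then have "s \<le> (\<Sum>j\<in>C. Poly_Mapping.lookup (a - Poly_Mapping.single i 1) j)"
      using s sum_lookup_remove_single[OF assms i] by linarith
    then obtain g where g: "g \<in> sumset_pow ((\<lambda>i. Poly_Mapping.single i 1) ` C) s"
      "exp_le g (a - Poly_Mapping.single i 1)"
      using Suc.IH[of "a - Poly_Mapping.single i 1", THEN iffD2] by blast
    have "exp_le (g + Poly_Mapping.single i 1) a"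
      using g(2) exp_le_single[THEN iffD2, OF i(2)] exp_le_add_iff by blast
    moreover have "g + Poly_Mapping.single i 1 \<in> sumset_pow ((\<lambda>i. Poly_Mapping.single i 1) ` C) (Suc s)"
      unfolding sumset_pow.simps using g(1) i(1) by blast
    ultimately show "\<exists>g\<in>sumset_pow ((\<lambda>i. Poly_Mapping.single i 1) ` C) (Suc s). exp_le g a"
      by (rule bexI)
  qed
qed

section \<open>Powers and symbolic powers of the edge ideal\<close>

definition exp_of_list :: "'v list \<Rightarrow> ('v \<Rightarrow>\<^sub>0 nat)" where
  "exp_of_list xs = sum_list (map (\<lambda>i. Poly_Mapping.single i 1) xs)"

lemma lookup_exp_of_list: "Poly_Mapping.lookup (exp_of_list xs) v = count_list xs v"
  by (induction xs) (auto simp: exp_of_list_def lookup_add lookup_single when_def)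

lemma exp_of_list_Nil [simp]: "exp_of_list [] = 0"
  by (simp add: exp_of_list_def)

lemma exp_of_list_Cons: "exp_of_list (x # xs) = Poly_Mapping.single x 1 + exp_of_list xs"
  by (simp add: exp_of_list_def)

lemma exp_of_list_append: "exp_of_list (xs @ ys) = exp_of_list xs + exp_of_list ys"
  by (simp add: exp_of_list_def)

definition edge_exps :: "'v set set \<Rightarrow> ('v \<Rightarrow>\<^sub>0 nat) set" where
  "edge_exps E = {exp_of_list [i, j] | i j. {i, j} \<in> E}"

lemma ideal_pow_edge_ideal:
  "(ideal_pow (edge_ideal E) s :: ('v, 'k::comm_ring_1) mpoly set)
     = monomial_ideal (\<lambda>a. \<exists>g\<in>sumset_pow (edge_exps E) s. exp_le g a)"
proof -
  have gens: "{var i * var j | i j. {i, j} \<in> E} = (monom ` edge_exps E :: ('v, 'k) mpoly set)"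
    by (auto simp: edge_exps_def var_def monom_mult exp_of_list_def intro!: imageI)
  show ?thesis
    unfolding edge_ideal_def gens ideal_pow_ideal_gen_monom by (rule ideal_gen_monom)
qed

lemma sumset_pow_edge_exps_3:
  "g \<in> sumset_pow (edge_exps E) 3 \<longleftrightarrow>
     (\<exists>x1 y1 x2 y2 x3 y3. {x1, y1} \<in> E \<and> {x2, y2} \<in> E \<and> {x3, y3} \<in> E \<and>
        g = exp_of_list [x1, y1, x2, y2, x3, y3])"
proof -
  have sum3: "exp_of_list [x1, y1] + exp_of_list [x2, y2] + exp_of_list [x3, y3]
      = exp_of_list [x1, y1, x2, y2, x3, y3]" for x1 y1 x2 y2 x3 y3 :: 'v
    by (simp add: exp_of_list_Cons add.assoc)
  show ?thesis
    unfolding numeral_3_eq_3 sumset_pow.simps edge_exps_def by (auto simp flip: sum3) blast+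
qed

lemma exp_le_sumset_pow_edges_3:
  "(\<exists>g\<in>sumset_pow (edge_exps E) 3. exp_le g a) \<longleftrightarrow>
     (\<exists>x1 y1 x2 y2 x3 y3. {x1, y1} \<in> E \<and> {x2, y2} \<in> E \<and> {x3, y3} \<in> E \<and>
        (\<forall>v. count_list [x1, y1, x2, y2, x3, y3] v \<le> Poly_Mapping.lookup a v))"
  unfolding Bex_def sumset_pow_edge_exps_3 exp_le_def
  by (auto simp del: count_list.simps simp: lookup_exp_of_list) (blast, metis lookup_exp_of_list)

lemma ideal_pow_prime_of:
  fixes C :: "'v::finite set"
  shows "(ideal_pow (prime_of C) s :: ('v, 'k::comm_ring_1) mpoly set)
     = monomial_ideal (\<lambda>a. s \<le> (\<Sum>i\<in>C. Poly_Mapping.lookup a i))"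
proof -
  have vars: "var ` C = (monom ` ((\<lambda>i. Poly_Mapping.single i 1) ` C) :: ('v, 'k) mpoly set)"
    by (auto simp: var_def)
  show ?thesis
    unfolding prime_of_def vars ideal_pow_ideal_gen_monom
    unfolding ideal_gen_monom exp_le_sumset_pow_vars[OF finite] ..
qed

lemma vertex_cover_contains_min:
  fixes D :: "'v::finite set"
  assumes "vertex_cover E D"
  shows "\<exists>C\<in>min_vertex_covers E. C \<subseteq> D"
  using assms
proof (induction "card D" arbitrary: D rule: less_induct)
  case less
  show ?case
  proof (cases "D \<in> min_vertex_covers E")
    case False
    then obtain D' where D': "D' \<subset> D" "vertex_cover E D'"
      using less.prems unfolding min_vertex_covers_def by blast
    then have "card D' < card D" by (simp add: psubset_card_mono)
    then obtain C where "C \<in> min_vertex_covers E" "C \<subseteq> D'" using less D' by blast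
    then show ?thesis using D' by blast
  qed blast
qed

definition cover_weight_ge :: "'v set set \<Rightarrow> nat \<Rightarrow> ('v \<Rightarrow> nat) \<Rightarrow> bool" where
  "cover_weight_ge E k W \<longleftrightarrow> (\<forall>C. vertex_cover E C \<longrightarrow> k \<le> sum W C)"

lemma cover_weight_ge_iff_min_covers:
  fixes W :: "'v::finite \<Rightarrow> nat"
  shows "cover_weight_ge E k W \<longleftrightarrow> (\<forall>C\<in>min_vertex_covers E. k \<le> sum W C)"
proof
  assume H: "\<forall>C\<in>min_vertex_covers E. k \<le> sum W C"
  show "cover_weight_ge E k W" unfolding cover_weight_ge_def
  proof (intro allI impI)
    fix D assume "vertex_cover E D"
    then obtain C where "C \<in> min_vertex_covers E" "C \<subseteq> D" using vertex_cover_contains_min by blast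
    then have "k \<le> sum W C" "sum W C \<le> sum W D" using H by (auto intro: sum_mono2)
    then show "k \<le> sum W D" by linarith
  qed
qed (auto simp: cover_weight_ge_def min_vertex_covers_def)

lemma cover_weight_ge_mono:
  "cover_weight_ge E k V \<Longrightarrow> (\<And>v. V v \<le> W v) \<Longrightarrow> cover_weight_ge E k W"
  unfolding cover_weight_ge_def by (meson order_trans sum_mono)

lemma symbolic_power_eq:
  "(symbolic_power E k :: ('v::finite, 'k::comm_ring_1) mpoly set)
     = monomial_ideal (\<lambda>a. cover_weight_ge E k (Poly_Mapping.lookup a))"
  unfolding symbolic_power_def ideal_pow_prime_of cover_weight_ge_iff_min_covers monomial_ideal_def
  by auto

text \<open>The monomial \<open>\<Prod>xs\<close> divides \<open>x\<^sup>W\<close>.\<close>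
definition dominates :: "'v list \<Rightarrow> ('v \<Rightarrow> nat) \<Rightarrow> bool" where
  "dominates xs W \<longleftrightarrow> (\<forall>v. count_list xs v \<le> W v)"

definition dominates_three_edges :: "'v set set \<Rightarrow> ('v \<Rightarrow> nat) \<Rightarrow> bool" where
  "dominates_three_edges E W \<longleftrightarrow> (\<exists>x1 y1 x2 y2 x3 y3. {x1, y1} \<in> E \<and> {x2, y2} \<in> E \<and> {x3, y3} \<in> E \<and>
     dominates [x1, y1, x2, y2, x3, y3] W)"

lemma ideal_pow_edge_ideal_3:
  "(ideal_pow (edge_ideal E) 3 :: ('v, 'k::comm_ring_1) mpoly set)
     = monomial_ideal (\<lambda>a. dominates_three_edges E (Poly_Mapping.lookup a))"
  unfolding ideal_pow_edge_ideal exp_le_sumset_pow_edges_3 dominates_three_edges_def dominates_def ..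

lemma min_monomial_gen_edge_ideal_pow_2:
  assumes "min_monomial_gen (ideal_pow (edge_ideal E) 2) (u :: ('v, 'k::comm_ring_1) mpoly)"
  obtains p q r s where "{p, q} \<in> E" "{r, s} \<in> E" "u = monom (exp_of_list [p, q, r, s])"
proof -
  from assms obtain c where c: "u = monom c" "u \<in> ideal_pow (edge_ideal E) 2"
    and min: "\<forall>v. is_monomial v \<and> v \<in> ideal_pow (edge_ideal E) 2 \<and> v dvd u \<longrightarrow> v = u"
    unfolding min_monomial_gen_def is_monomial_def by blast
  then obtain g where g: "g \<in> sumset_pow (edge_exps E) 2" "exp_le g c"
    unfolding ideal_pow_edge_ideal monomial_ideal_def by auto
  have "(monom g :: ('v, 'k) mpoly) \<in> ideal_pow (edge_ideal E) 2"
    unfolding ideal_pow_edge_ideal monomial_ideal_def using g(1) by (auto simp: exp_le_def)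
  moreover have "(monom g :: ('v, 'k) mpoly) dvd u"
  proof
    show "u = monom g * monom (c - g)"
      using exp_le_diff_add[OF g(2)] c(1) by (simp add: monom_mult add.commute)
  qed
  ultimately have "(monom g :: ('v, 'k) mpoly) = u" using min unfolding is_monomial_def by blast
  moreover from g(1) obtain p q r s where "g = exp_of_list [p, q] + exp_of_list [r, s]" "{p, q} \<in> E" "{r, s} \<in> E"
    by (auto simp: edge_exps_def numeral_2_eq_2)
  ultimately show ?thesis
    using that exp_of_list_append[of "[p, q]" "[r, s]"] by auto
qed

section \<open>The combinatorial core\<close>

lemma dominates_pair_iff:
  "dominates [y, z] f \<longleftrightarrow> (y \<noteq> z \<and> 1 \<le> f y \<and> 1 \<le> f z) \<or> (y = z \<and> 2 \<le> f y)"
proof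
  assume "dominates [y, z] f"
  then have "count_list [y, z] y \<le> f y" "count_list [y, z] z \<le> f z" unfolding dominates_def by blast+
  then show "(y \<noteq> z \<and> 1 \<le> f y \<and> 1 \<le> f z) \<or> (y = z \<and> 2 \<le> f y)"
    by (cases "y = z") auto
qed (auto simp: dominates_def)

lemma dominates_mset_cong: "mset xs = mset ys \<Longrightarrow> dominates xs W \<longleftrightarrow> dominates ys W"
  unfolding dominates_def by (metis count_mset)

lemma dominates_append:
  "dominates xs f \<Longrightarrow> dominates (xs @ ys) (\<lambda>v. f v + count_list ys v)"
  unfolding dominates_def by (simp add: add_mono)

lemma sum_count_list_eq_length_filter:
  "finite C \<Longrightarrow> (\<Sum>v\<in>C. count_list xs v) = length (filter (\<lambda>v. v \<in> C) xs)"
proof (induction xs)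
  case (Cons x xs)
  have "(\<Sum>v\<in>C. count_list (x # xs) v) = (\<Sum>v\<in>C. (if x = v then 1 else 0) + count_list xs v)"
    by (intro sum.cong) auto
  also have "\<dots> = (if x \<in> C then 1 else 0) + length (filter (\<lambda>v. v \<in> C) xs)"
    using Cons by (simp add: sum.distrib)
  finally show ?case by simp
qed simp

lemma cover_weight_ge_clique5:
  fixes E :: "'v::finite set set"
  assumes "{y, a} \<in> E" "{y, b} \<in> E" "{y, c} \<in> E" "{y, d} \<in> E" "{a, b} \<in> E" "{a, c} \<in> E"
      "{a, d} \<in> E" "{b, c} \<in> E" "{b, d} \<in> E" "{c, d} \<in> E"
  shows "cover_weight_ge E 4 (count_list [y, a, b, c, d])"
  unfolding cover_weight_ge_def
proof (intro allI impI)
  fix C assume C: "vertex_cover E C"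
  have covered: "x \<in> C \<or> z \<in> C" if "{x, z} \<in> E" for x z
  proof -
    from C that have "{x, z} \<inter> C \<noteq> {}" unfolding vertex_cover_def by (rule bspec)
    then show ?thesis by auto
  qed
  note hit = covered[OF assms(1)] covered[OF assms(2)] covered[OF assms(3)] covered[OF assms(4)]
    covered[OF assms(5)] covered[OF assms(6)] covered[OF assms(7)] covered[OF assms(8)]
    covered[OF assms(9)] covered[OF assms(10)]
  have "4 \<le> length (filter (\<lambda>v. v \<in> C) [y, a, b, c, d])"
  proof (cases "y \<in> C")
    case True
    then show ?thesis using hit
      by (cases "a \<in> C"; cases "b \<in> C"; cases "c \<in> C"; cases "d \<in> C") simp_all
  next
    case False
    then have "a \<in> C" "b \<in> C" "c \<in> C" "d \<in> C" using hit by auto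
    then show ?thesis by simp
  qed
  then show "4 \<le> (\<Sum>v\<in>C. count_list [y, a, b, c, d] v)"
    by (simp only: sum_count_list_eq_length_filter[OF finite])
qed

lemma gap_free_cross_edge:
  assumes simple: "simple_graph E" and gap: "gap_free E"
    and "{a, b} \<in> E" "{c, d} \<in> E" "distinct [a, b, c, d]"
  shows "{a, c} \<in> E \<or> {a, d} \<in> E \<or> {b, c} \<in> E \<or> {b, d} \<in> E"
proof (rule ccontr)
  assume no_cross: "\<not> ?thesis"
  have "{e \<in> E. e \<subseteq> {a, b} \<union> {c, d}} \<subseteq> {{a, b}, {c, d}}"
  proof
    fix e assume e: "e \<in> {e \<in> E. e \<subseteq> {a, b} \<union> {c, d}}"
    then have "card e = 2" using simple unfolding simple_graph_def by blast
    then obtain x y where xy: "e = {x, y}" "x \<noteq> y" unfolding card_2_iff by blast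
    have "x \<in> {a, b, c, d}" "y \<in> {a, b, c, d}" "{x, y} \<in> E" using e xy by auto
    then show "e \<in> {{a, b}, {c, d}}"
      using xy no_cross by (auto simp: insert_commute)
  qed
  then have "{a, b} \<inter> {c, d} = {} \<and> {e \<in> E. e \<subseteq> {a, b} \<union> {c, d}} = {{a, b}, {c, d}}"
    using assms(3-5) by auto
  then have "\<exists>e1\<in>E. \<exists>e2\<in>E. e1 \<inter> e2 = {} \<and> {e \<in> E. e \<subseteq> e1 \<union> e2} = {e1, e2}"
    by (intro bexI[where x="{a, b}"] bexI[where x="{c, d}"] assms(3,4))
  then show False using gap unfolding gap_free_def by (rule notE[rotated])
qed

text \<open>The exponent \<open>W\<close> of a monomial \<open>m \<cdot> x\<^sub>a x\<^sub>b x\<^sub>c x\<^sub>d\<close> with \<open>ab\<close>, \<open>cd\<close> edges,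
lying in \<open>I(G)\<^sup>(\<^sup>4\<^sup>)\<close> but not in \<open>I(G)\<^sup>3\<close>; \<open>f\<close> is the exponent of \<open>m\<close>.\<close>
locale symb4_not_pow3 =
  fixes E :: "'v::finite set set" and f W :: "'v \<Rightarrow> nat" and a b c d :: 'v
  assumes simple: "simple_graph E"
    and eab: "{a, b} \<in> E" and ecd: "{c, d} \<in> E"
    and W_def: "W = (\<lambda>v. f v + count_list [a, b, c, d] v)"
    and cover4: "cover_weight_ge E 4 W"
    and not_pow3: "\<not> dominates_three_edges E W"
begin

lemma edge_commute: "{x, y} \<in> E \<longleftrightarrow> {y, x} \<in> E"
  by (simp add: insert_commute)

lemma edge_distinct: "{x, y} \<in> E \<Longrightarrow> x \<noteq> y"
  using simple unfolding simple_graph_def by fastforce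

lemma W_pos_iff: "0 < W x \<longleftrightarrow> x \<in> {a, b, c, d} \<or> 1 \<le> f x"
  by (auto simp: W_def)

lemma sum_W: "sum W K = sum f K + length (filter (\<lambda>v. v \<in> K) [a, b, c, d])"
proof -
  have "sum W K = sum f K + (\<Sum>v\<in>K. count_list [a, b, c, d] v)"
    unfolding W_def by (rule sum.distrib)
  then show ?thesis by (simp only: sum_count_list_eq_length_filter[OF finite])
qed

lemma no_three_edges:
  assumes "dominates [y, z] f" "{e1, e2} \<in> E" "{e3, e4} \<in> E" "{e5, e6} \<in> E"
    and "mset [e1, e2, e3, e4, e5, e6] = mset [y, z, a, b, c, d]"
  shows False
proof -
  have "dominates ([y, z] @ [a, b, c, d]) W"
    unfolding W_def by (rule dominates_append) fact
  then have "dominates [e1, e2, e3, e4, e5, e6] W"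
    using dominates_mset_cong[OF assms(5)] by simp
  then show False
    using not_pow3 assms(2-4) unfolding dominates_three_edges_def by blast
qed

lemma f_support_independent:
  assumes "{x, y} \<in> E" "1 \<le> f x" "1 \<le> f y"
  shows False
proof -
  have "dominates [x, y] f"
    unfolding dominates_pair_iff using assms edge_distinct[OF assms(1)] by simp
  then show False by (rule no_three_edges[OF _ assms(1) eab ecd refl])
qed

text \<open>\<open>K\<close> together with the zeros of \<open>W\<close> is a vertex cover: an uncovered edge would join two
vertices of the independent support of \<open>f\<close>.\<close>
lemma no_light_cover:
  assumes light: "sum W K \<le> 3"
    and closed: "\<And>t z. t \<in> {a, b, c, d} \<Longrightarrow> t \<notin> K \<Longrightarrow> {t, z} \<in> E \<Longrightarrow> 0 < W z \<Longrightarrow> z \<in> K"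
  shows False
proof -
  define D where "D = K \<union> {v. W v = 0}"
  have "vertex_cover E D"
    unfolding vertex_cover_def
  proof
    fix e assume "e \<in> E"
    then obtain x y where e: "e = {x, y}"
      using simple unfolding simple_graph_def card_2_iff by blast
    show "e \<inter> D \<noteq> {}"
    proof (rule ccontr)
      assume "\<not> e \<inter> D \<noteq> {}"
      then have out: "x \<notin> K" "y \<notin> K" "0 < W x" "0 < W y" unfolding e D_def by auto
      have "x \<notin> {a, b, c, d}" using closed out \<open>e \<in> E\<close> e by blast
      moreover have "y \<notin> {a, b, c, d}" using closed out \<open>e \<in> E\<close> e edge_commute by blast
      ultimately show False
        using out W_pos_iff f_support_independent \<open>e \<in> E\<close> e by blast
    qed
  qed
  then have "4 \<le> sum W D" using cover4 unfolding cover_weight_ge_def by blast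
  also have "sum W D \<le> sum W K + sum W {v. W v = 0}"
    unfolding D_def by (simp add: sum_Un_nat)
  also have "sum W {v. W v = 0} = 0" by simp
  finally show False using light by simp
qed

lemma f_zero_on_u: "f a = 0 \<and> f b = 0 \<and> f c = 0 \<and> f d = 0"
proof (rule ccontr)
  assume "\<not> ?thesis"
  then obtain t where t: "t \<in> set [a, b, c, d]" "f t \<noteq> 0" by auto
  define K where "K = {v \<in> set [a, b, c, d]. f v = 0}"
  have "sum f K = 0" unfolding K_def by simp
  moreover have "filter (\<lambda>v. v \<in> K) [a, b, c, d] = filter (\<lambda>v. f v = 0) [a, b, c, d]"
    unfolding K_def by (intro filter_cong) auto
  ultimately have "sum W K = length (filter (\<lambda>v. f v = 0) [a, b, c, d])"
    by (simp add: sum_W)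
  also have "\<dots> < 4" using length_filter_less[of t _ "\<lambda>v. f v = 0", OF t] by simp
  finally have "sum W K \<le> 3" by simp
  moreover have "z \<in> K" if "t \<in> {a, b, c, d}" "t \<notin> K" "{t, z} \<in> E" "0 < W z" for t z
    using that f_support_independent[of t z] unfolding K_def W_pos_iff by force
  ultimately show False by (rule no_light_cover)
qed

lemma f_neighbours_coincide:
  assumes u: "mset [x, y, v, w] = mset [a, b, c, d]" "{v, w} \<in> E"
    and nbrs: "{x, y'} \<in> E" "1 \<le> f y'" "{y, z'} \<in> E" "1 \<le> f z'"
  shows "y' = z' \<and> f y' = 1"
proof (rule ccontr)
  assume "\<not> ?thesis"
  then have "dominates [y', z'] f" unfolding dominates_pair_iff using nbrs(2,4) by auto
  moreover have "{y', x} \<in> E" "{z', y} \<in> E" using nbrs(1,3) edge_commute by blast+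
  moreover have "mset [y', x, z', y, v, w] = mset [y', z', a, b, c, d]"
    using u(1)[symmetric] by (simp add: add_mset_commute)
  ultimately show False using no_three_edges u(2) by blast
qed

lemma double_edge_impossible:
  assumes "c = a" "d = b"
  shows False
proof -
  have ab: "a \<noteq> b" using edge_distinct eab by blast
  have W: "W a = 2" "W b = 2" using assms f_zero_on_u ab by (simp_all add: W_def)
  have nbr: "y = z \<and> f y = 1" if "{a, y} \<in> E" "1 \<le> f y" "{b, z} \<in> E" "1 \<le> f z" for y z
    using f_neighbours_coincide[OF _ eab that] assms by auto
  consider (a_free) "\<nexists>y. {a, y} \<in> E \<and> 1 \<le> f y"
    | (b_free) ya where "{a, ya} \<in> E" "1 \<le> f ya" "\<nexists>z. {b, z} \<in> E \<and> 1 \<le> f z"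
    | (both) ya yb where "{a, ya} \<in> E" "1 \<le> f ya" "{b, yb} \<in> E" "1 \<le> f yb"
    by blast
  then show False
  proof cases
    case a_free
    show False
    proof (rule no_light_cover[of "{b}"])
      fix t z assume "t \<in> {a, b, c, d}" "t \<notin> {b}" "{t, z} \<in> E" "0 < W z"
      then show "z \<in> {b}" using a_free assms edge_distinct unfolding W_pos_iff by auto
    qed (simp add: W)
  next
    case b_free
    show False
    proof (rule no_light_cover[of "{a}"])
      fix t z assume "t \<in> {a, b, c, d}" "t \<notin> {a}" "{t, z} \<in> E" "0 < W z"
      then show "z \<in> {a}" using b_free assms edge_distinct edge_commute unfolding W_pos_iff by auto
    qed (simp add: W)
  next
    case (both ya yb)
    have ya: "f ya = 1" "ya \<noteq> a" "ya \<noteq> b" using nbr[OF both] f_zero_on_u by auto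
    show False
    proof (rule no_light_cover[of "{a, ya}"])
      show "sum W {a, ya} \<le> 3" using ya W assms by (simp add: W_def)
      fix t z assume "t \<in> {a, b, c, d}" "t \<notin> {a, ya}" "{t, z} \<in> E" "0 < W z"
      then show "z \<in> {a, ya}"
        using nbr[OF both(1,2), of z] assms edge_distinct unfolding W_pos_iff by auto
    qed
  qed
qed

lemma path_impossible:
  assumes "c = a" "b \<noteq> d"
  shows False
proof -
  have ad: "a \<noteq> b" "a \<noteq> d" using edge_distinct eab ecd assms by blast+
  have W: "W a = 2" "W b = 1" "W d = 1" using assms f_zero_on_u ad by (simp_all add: W_def)
  have ead: "{a, d} \<in> E" using ecd assms by simp
  have nbr: "y = z \<and> f y = 1" if "{a, y} \<in> E" "1 \<le> f y" "{b, z} \<in> E" "1 \<le> f z" for y z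
    using f_neighbours_coincide[OF _ ead that] assms by (auto simp: add_mset_commute)
  consider (a_free) "\<nexists>y. {a, y} \<in> E \<and> 1 \<le> f y"
    | (b_free) ya where "{a, ya} \<in> E" "1 \<le> f ya" "\<nexists>z. {b, z} \<in> E \<and> 1 \<le> f z"
    | (both) ya yb where "{a, ya} \<in> E" "1 \<le> f ya" "{b, yb} \<in> E" "1 \<le> f yb"
    by blast
  then show False
  proof cases
    case a_free
    show False
    proof (rule no_light_cover[of "{b, d}"])
      fix t z assume "t \<in> {a, b, c, d}" "t \<notin> {b, d}" "{t, z} \<in> E" "0 < W z"
      then show "z \<in> {b, d}" using a_free assms edge_distinct unfolding W_pos_iff by auto
    qed (simp add: W assms)
  next
    case b_free
    show False
    proof (rule no_light_cover[of "{a, d}"])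
      fix t z assume "t \<in> {a, b, c, d}" "t \<notin> {a, d}" "{t, z} \<in> E" "0 < W z"
      then show "z \<in> {a, d}" using b_free assms edge_distinct edge_commute unfolding W_pos_iff by auto
    qed (simp add: W ad)
  next
    case (both ya yb)
    have ya: "f ya = 1" "ya \<noteq> a" "ya \<noteq> b" "ya \<noteq> d" using nbr[OF both] f_zero_on_u by auto
    show False
    proof (rule no_light_cover[of "{b, d, ya}"])
      show "sum W {b, d, ya} \<le> 3" using ya W assms by (simp add: W_def)
      fix t z assume "t \<in> {a, b, c, d}" "t \<notin> {b, d, ya}" "{t, z} \<in> E" "0 < W z"
      then show "z \<in> {b, d, ya}"
        using nbr[of z yb] nbr[OF both] both(3,4) assms edge_distinct unfolding W_pos_iff by auto
    qed
  qed
qed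

end

locale symb4_not_pow3_disjoint = symb4_not_pow3 +
  assumes distinct: "distinct [a, b, c, d]"
    and gap_free: "gap_free E"
    and no_var: "\<And>i. 1 \<le> f i \<Longrightarrow> \<not> cover_weight_ge E 4 (count_list [i, a, b, c, d])"
begin

lemma W_eq_1_on_u: "t \<in> {a, b, c, d} \<Longrightarrow> W t = 1"
  using distinct f_zero_on_u by (auto simp: W_def)

lemma other_endpoints:
  assumes "p \<in> {a, b}" "q \<in> {c, d}"
  obtains p' q' where "mset [p, p', q, q'] = mset [a, b, c, d]" "p' \<in> {a, b}" "q' \<in> {c, d}"
proof -
  from assms consider "p = a" "q = c" | "p = a" "q = d" | "p = b" "q = c" | "p = b" "q = d" by blast
  then show thesis
  proof cases
    case 1 show thesis by (rule that[of b d]) (use 1 in simp_all)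
  next
    case 2 show thesis by (rule that[of b c]) (use 2 in \<open>simp_all add: add_mset_commute\<close>)
  next
    case 3 show thesis by (rule that[of a d]) (use 3 in \<open>simp_all add: add_mset_commute\<close>)
  next
    case 4 show thesis by (rule that[of a c]) (use 4 in \<open>simp_all add: add_mset_commute\<close>)
  qed
qed

lemma has_f_neighbour:
  assumes t: "t \<in> {a, b, c, d}"
  shows "\<exists>y. {t, y} \<in> E \<and> 1 \<le> f y"
proof (rule ccontr)
  assume none: "\<nexists>y. {t, y} \<in> E \<and> 1 \<le> f y"
  show False
  proof (rule no_light_cover[of "{a, b, c, d} - {t}"])
    have "sum W {a, b, c, d} = 4" using distinct W_eq_1_on_u by simp
    then show "sum W ({a, b, c, d} - {t}) \<le> 3"
      using t W_eq_1_on_u by (simp add: sum_diff1_nat)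
    fix t' z assume "t' \<in> {a, b, c, d}" "t' \<notin> {a, b, c, d} - {t}" "{t', z} \<in> E" "0 < W z"
    then show "z \<in> {a, b, c, d} - {t}" using none edge_distinct unfolding W_pos_iff by auto
  qed
qed

lemma unique_f_neighbour:
  assumes u: "mset [x, y, v, w] = mset [a, b, c, d]" "{v, w} \<in> E"
  obtains n where "f n = 1" "{x, n} \<in> E" "{y, n} \<in> E"
    "\<And>t z. t \<in> {x, y} \<Longrightarrow> {t, z} \<in> E \<Longrightarrow> 1 \<le> f z \<Longrightarrow> z = n"
proof -
  have "set [x, y, v, w] = set [a, b, c, d]" using u(1) by (metis set_mset_mset)
  then have "x \<in> {a, b, c, d}" "y \<in> {a, b, c, d}" by auto
  then obtain nx ny where nx: "{x, nx} \<in> E" "1 \<le> f nx" and ny: "{y, ny} \<in> E" "1 \<le> f ny"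
    using has_f_neighbour by blast
  have same: "nx = ny" "f nx = 1" using f_neighbours_coincide[OF u nx ny] by auto
  have "z = nx" if t: "t \<in> {x, y}" and z: "{t, z} \<in> E" "1 \<le> f z" for t z
  proof -
    consider "t = x" | "t = y" using t by blast
    then show ?thesis
    proof cases
      case 1
      then show ?thesis using f_neighbours_coincide[OF u _ _ ny] z same by simp
    next
      case 2
      then show ?thesis using f_neighbours_coincide[OF u nx] z by simp
    qed
  qed
  then show ?thesis using that[of nx] same nx ny by simp
qed

lemma common_f_neighbour_impossible:
  assumes n: "f n = 1" "\<And>t. t \<in> {a, b, c, d} \<Longrightarrow> {t, n} \<in> E"
    and unique: "\<And>t z. t \<in> {a, b, c, d} \<Longrightarrow> {t, z} \<in> E \<Longrightarrow> 1 \<le> f z \<Longrightarrow> z = n"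
  shows False
proof -
  have n_new: "n \<notin> {a, b, c, d}" using n(1) f_zero_on_u by auto
  have cross: "{p, q} \<in> E" if p: "p \<in> {a, b}" and q: "q \<in> {c, d}" for p q
  proof (rule ccontr)
    assume non_edge: "{p, q} \<notin> E"
    obtain p' q' where u_mset: "mset [p, p', q, q'] = mset [a, b, c, d]"
      and p': "p' \<in> {a, b}" and q': "q' \<in> {c, d}"
      using other_endpoints[OF p q] by blast
    have u: "{a, b, c, d} = {p, p', q, q'}" using arg_cong[OF u_mset, of set_mset] by simp
    show False
    proof (rule no_light_cover[of "{p', q', n}"])
      have "p' \<noteq> q'" "n \<noteq> p'" "n \<noteq> q'" using p' q' distinct n_new by auto
      moreover have "W p' = 1" "W q' = 1" using W_eq_1_on_u p' q' by auto
      moreover have "W n = 1" using n_new n(1) by (auto simp: W_def)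
      ultimately show "sum W {p', q', n} \<le> 3" by simp
      fix t z assume t: "t \<in> {a, b, c, d}" "t \<notin> {p', q', n}" and z: "{t, z} \<in> E" "0 < W z"
      have "t = p \<or> t = q" using t u by blast
      moreover have "z \<noteq> t" using edge_distinct z(1) by blast
      moreover have "{p, q} \<noteq> {t, z}" using non_edge z(1) by auto
      ultimately have "z \<notin> {p, q}" by blast
      moreover have "z \<in> {p, p', q, q'} \<or> z = n"
        using z unique[OF t(1) z(1)] u unfolding W_pos_iff by blast
      ultimately show "z \<in> {p', q', n}" by blast
    qed
  qed
  have "cover_weight_ge E 4 (count_list [n, a, b, c, d])"
    using cross n(2) eab ecd edge_commute by (intro cover_weight_ge_clique5) auto
  then show False using no_var n(1) by simp
qed

lemma distinct_f_neighbours_impossible: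
  assumes "n \<noteq> n'" "f n = 1" "f n' = 1"
    and "{a, n} \<in> E" "{b, n} \<in> E" "{c, n'} \<in> E" "{d, n'} \<in> E"
  shows False
proof -
  have pair: "dominates [n, n'] f" unfolding dominates_pair_iff using assms(1-3) by simp
  have nbrs: "{n, a} \<in> E" "{n, b} \<in> E" "{n', c} \<in> E" "{n', d} \<in> E"
    using assms(4-7) edge_commute by blast+
  have no_cross: "{p, q} \<notin> E" if p: "p \<in> {a, b}" and q: "q \<in> {c, d}" for p q
  proof
    assume "{p, q} \<in> E"
    obtain p' q' where u: "mset [p, p', q, q'] = mset [a, b, c, d]" and "p' \<in> {a, b}" "q' \<in> {c, d}"
      using other_endpoints[OF p q] by blast
    then have "{n, p'} \<in> E" "{n', q'} \<in> E" using nbrs by auto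
    moreover have "mset [n, p', n', q', p, q] = mset [n, n', a, b, c, d]"
      using u[symmetric] by (simp add: add_mset_commute)
    ultimately show False using no_three_edges[OF pair] \<open>{p, q} \<in> E\<close> by blast
  qed
  then show False
    using gap_free_cross_edge[OF simple gap_free eab ecd distinct] by blast
qed

lemma disjoint_impossible: False
proof -
  obtain n where n: "f n = 1" "{a, n} \<in> E" "{b, n} \<in> E"
    and n_unique: "\<And>t z. t \<in> {a, b} \<Longrightarrow> {t, z} \<in> E \<Longrightarrow> 1 \<le> f z \<Longrightarrow> z = n"
    using unique_f_neighbour[OF _ ecd] by blast
  obtain n' where n': "f n' = 1" "{c, n'} \<in> E" "{d, n'} \<in> E"
    and n'_unique: "\<And>t z. t \<in> {c, d} \<Longrightarrow> {t, z} \<in> E \<Longrightarrow> 1 \<le> f z \<Longrightarrow> z = n'"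
    using unique_f_neighbour[OF _ eab] by (auto simp: add_mset_commute)
  show False
  proof (cases "n = n'")
    case True
    then show False
      using n n' n_unique n'_unique by (intro common_f_neighbour_impossible[of n]) auto
  next
    case False
    then show False by (rule distinct_f_neighbours_impossible[OF _ n(1) n'(1) n(2,3) n'(2,3)])
  qed
qed

end

lemma symb4_not_pow3I:
  fixes E :: "'v::finite set set"
  assumes "simple_graph E" "{a, b} \<in> E" "{c, d} \<in> E" "mset [a, b, c, d] = mset [p, q, r, s]"
    and "cover_weight_ge E 4 (\<lambda>v. f v + count_list [p, q, r, s] v)"
    and "\<not> dominates_three_edges E (\<lambda>v. f v + count_list [p, q, r, s] v)"
  shows "symb4_not_pow3 E f (\<lambda>v. f v + count_list [p, q, r, s] v) a b c d"
proof
  show "(\<lambda>v. f v + count_list [p, q, r, s] v) = (\<lambda>v. f v + count_list [a, b, c, d] v)"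
    using assms(4) by (simp flip: count_mset)
qed (use assms in auto)

lemma symb4_not_pow3_has_var:
  fixes E :: "'v::finite set set" and f :: "'v \<Rightarrow> nat"
  assumes simple: "simple_graph E" and gap: "gap_free E"
    and epq: "{p, q} \<in> E" and ers: "{r, s} \<in> E"
    and cover4: "cover_weight_ge E 4 (\<lambda>v. f v + count_list [p, q, r, s] v)"
    and not_pow3: "\<not> dominates_three_edges E (\<lambda>v. f v + count_list [p, q, r, s] v)"
  shows "\<exists>i. 1 \<le> f i \<and> cover_weight_ge E 4 (count_list [i, p, q, r, s])"
proof (rule ccontr)
  assume no_var: "\<not> ?thesis"
  have double: False if "{a, b} \<in> E" "mset [a, b, a, b] = mset [p, q, r, s]" for a b
    using symb4_not_pow3.double_edge_impossible[OF symb4_not_pow3I] that simple cover4 not_pow3 by blast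
  have path: False if "{a, b} \<in> E" "{a, d} \<in> E" "b \<noteq> d" "mset [a, b, a, d] = mset [p, q, r, s]" for a b d
    using symb4_not_pow3.path_impossible[OF symb4_not_pow3I] that simple cover4 not_pow3 by blast
  have disjoint: False if "distinct [p, q, r, s]"
  proof -
    have "symb4_not_pow3_disjoint E f (\<lambda>v. f v + count_list [p, q, r, s] v) p q r s"
      using symb4_not_pow3I[OF simple epq ers refl cover4 not_pow3] that gap no_var
      by (simp add: symb4_not_pow3_disjoint_def symb4_not_pow3_disjoint_axioms_def)
    then show False by (rule symb4_not_pow3_disjoint.disjoint_impossible)
  qed
  have "p \<noteq> q" "r \<noteq> s" using simple epq ers unfolding simple_graph_def by fastforce+
  then consider "distinct [p, q, r, s]" | "p = r" | "p = s" | "q = r" | "q = s" by auto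
  then show False
  proof cases
    case 2
    then show False
      using double[OF epq] path[OF epq, of s] ers \<open>p \<noteq> q\<close> by (cases "q = s") auto
  next
    case 3
    then show False
      using double[OF epq] path[OF epq, of r] ers \<open>p \<noteq> q\<close>
      by (cases "q = r") (auto simp: insert_commute add_mset_commute)
  next
    case 4
    have eqp: "{q, p} \<in> E" using epq by (simp add: insert_commute)
    show False
      using 4 double[OF eqp] path[OF eqp, of s] ers \<open>p \<noteq> q\<close>
      by (cases "p = s") (auto simp: add_mset_commute)
  next
    case 5
    have eqp: "{q, p} \<in> E" using epq by (simp add: insert_commute)
    show False
      using 5 double[OF eqp] path[OF eqp, of r] ers \<open>p \<noteq> q\<close>
      by (cases "p = r") (auto simp: insert_commute add_mset_commute)
  qed (rule disjoint)
qed

lemma symb4_or_pow3_iff: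
  fixes E :: "'v::finite set set" and f :: "'v \<Rightarrow> nat"
  assumes "simple_graph E" "gap_free E" "{p, q} \<in> E" "{r, s} \<in> E"
  shows "cover_weight_ge E 4 (\<lambda>v. f v + count_list [p, q, r, s] v)
           \<or> dominates_three_edges E (\<lambda>v. f v + count_list [p, q, r, s] v)
     \<longleftrightarrow> dominates_three_edges E (\<lambda>v. f v + count_list [p, q, r, s] v)
           \<or> (\<exists>i\<in>{i. cover_weight_ge E 4 (count_list [i, p, q, r, s])}. 1 \<le> f i)"
proof -
  have "cover_weight_ge E 4 (\<lambda>v. f v + count_list [p, q, r, s] v)"
    if "1 \<le> f i" "cover_weight_ge E 4 (count_list [i, p, q, r, s])" for i
    using that(2) by (rule cover_weight_ge_mono) (use that(1) in auto)
  then show ?thesis using symb4_not_pow3_has_var[OF assms] by blast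
qed

section \<open>The colon ideals\<close>

lemma lookup_add_exp_of_list:
  "Poly_Mapping.lookup (a + exp_of_list xs) = (\<lambda>v. Poly_Mapping.lookup a v + count_list xs v)"
  by (auto simp: lookup_add lookup_exp_of_list)

lemma colon_symbolic_power_exp_of_list:
  "ideal_colon (symbolic_power E k :: ('v::finite, 'k::comm_ring_1) mpoly set) (monom (exp_of_list xs))
     = monomial_ideal (\<lambda>a. cover_weight_ge E k (\<lambda>v. Poly_Mapping.lookup a v + count_list xs v))"
  unfolding symbolic_power_eq ideal_colon_monomial_ideal lookup_add_exp_of_list ..

lemma colon_edge_ideal_pow_3_exp_of_list:
  "ideal_colon (ideal_pow (edge_ideal E) 3 :: ('v, 'k::comm_ring_1) mpoly set) (monom (exp_of_list xs))
     = monomial_ideal (\<lambda>a. dominates_three_edges E (\<lambda>v. Poly_Mapping.lookup a v + count_list xs v))"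
  unfolding ideal_pow_edge_ideal_3 ideal_colon_monomial_ideal lookup_add_exp_of_list ..

lemma vars_in_colon_symbolic_power:
  "{var i | i. var i \<in> ideal_colon (symbolic_power E k) (monom (exp_of_list xs))}
     = (var ` {i. cover_weight_ge E k (count_list (i # xs))} :: ('v::finite, 'k::comm_ring_1) mpoly set)"
proof -
  have "(\<lambda>v. Poly_Mapping.lookup (Poly_Mapping.single i 1) v + count_list xs v) = count_list (i # xs)" for i
    by (auto simp: lookup_single when_def)
  then show ?thesis
    unfolding colon_symbolic_power_exp_of_list var_mem_monomial_ideal by auto
qed

theorem lemma4p1:
  fixes E :: "'v::finite set set"
    and u :: "('v, 'k::field) mpoly"
  assumes "simple_graph E"
    and "gap_free E"
    and "min_monomial_gen (ideal_pow (edge_ideal E) 2) u"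
  shows "ideal_sum (ideal_colon (symbolic_power E 4) u) (ideal_colon (ideal_pow (edge_ideal E) 3) u)
       = ideal_sum (ideal_colon (ideal_pow (edge_ideal E) 3) u)
           (ideal_gen {var i | i. var i \<in> ideal_colon (symbolic_power E 4) u})"
proof -
  obtain p q r s where edges: "{p, q} \<in> E" "{r, s} \<in> E" and u: "u = monom (exp_of_list [p, q, r, s])"
    using min_monomial_gen_edge_ideal_pow_2[OF assms(3)] by blast
  show ?thesis
    unfolding u vars_in_colon_symbolic_power
    unfolding colon_symbolic_power_exp_of_list colon_edge_ideal_pow_3_exp_of_list ideal_gen_vars
      ideal_sum_monomial_ideal symb4_or_pow3_iff[OF assms(1,2) edges] ..
qed

end
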